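(* Let $r\ge 2$ and $s\ge 1$ be integers. If $F\in\mathcal{F}_r(n)$, then $\lambda(\overline{K}_s\vee F)=\lambda(\overline{K}_s\vee T_r(n))$.
   Context: $\lambda(\cdot)$ is the spectral radius of the adjacency matrix; $T_r(n)$ is the complete $r$-partite graph on $n$ vertices with part sizes differing by at most one; $\overline{K}_s$ is the edgeless graph on $s$ vertices and $\vee$ denotes the join. The family $\mathcal{F}_r(n)$: write $n=ra+b$ with $0\le b<r$ and $a=\lfloor n/r\rfloor\ge 1$. If $b=0$, $\mathcal{F}_r(n)$ is the set of all $(r-1)a$-regular graphs on $n$ vertices. If $1\le b<r$, $\mathcal{F}_r(n)$ is the set of all graphs $G$ on $n$ vertices having a partition $V(G)=X\sqcup Y$ with $|X|=b(a+1)$, $|Y|=(r-b)a$, such that every vertex of $X$ is adjacent to every vertex of $Y$, $G[X]$ is $(b-1)(a+1)$-regular, and $G[Y]$ is $(r-b-1)a$-regular. *)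

theory Defs
  imports "Jordan_Normal_Form.Spectral_Radius"
begin

definition simple_graph :: "nat \<Rightarrow> (nat \<Rightarrow> nat \<Rightarrow> bool) \<Rightarrow> bool" where
  "simple_graph n G \<longleftrightarrow> (\<forall>i j. G i j \<longrightarrow> i < n \<and> j < n \<and> i \<noteq> j \<and> G j i)"

definition adj_mat :: "nat \<Rightarrow> (nat \<Rightarrow> nat \<Rightarrow> bool) \<Rightarrow> complex mat" where
  "adj_mat n G = mat n n (\<lambda>(i, j). if G i j then 1 else 0)"

definition graph_spectral_radius :: "nat \<Rightarrow> (nat \<Rightarrow> nat \<Rightarrow> bool) \<Rightarrow> real" where
  "graph_spectral_radius n G = spectral_radius (adj_mat n G)"

text \<open>Join of the edgeless graph on s vertices (vertices 0..<s) with a graph F on n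
  vertices (shifted to vertices s..<s+n).\<close>
definition join_empty :: "nat \<Rightarrow> nat \<Rightarrow> (nat \<Rightarrow> nat \<Rightarrow> bool) \<Rightarrow> nat \<Rightarrow> nat \<Rightarrow> bool" where
  "join_empty s n F i j \<longleftrightarrow> i < s + n \<and> j < s + n \<and>
     ((i < s \<and> s \<le> j) \<or> (s \<le> i \<and> j < s) \<or> (s \<le> i \<and> s \<le> j \<and> F (i - s) (j - s)))"

text \<open>Turan graph T_r(n): parts are the residue classes mod r (sizes differ by at most one).\<close>
definition turan :: "nat \<Rightarrow> nat \<Rightarrow> nat \<Rightarrow> nat \<Rightarrow> bool" where
  "turan r n i j \<longleftrightarrow> i < n \<and> j < n \<and> i mod r \<noteq> j mod r"

definition regular_on :: "(nat \<Rightarrow> nat \<Rightarrow> bool) \<Rightarrow> nat set \<Rightarrow> nat \<Rightarrow> bool" where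
  "regular_on G S d \<longleftrightarrow> (\<forall>i\<in>S. card {j\<in>S. G i j} = d)"

definition family_F :: "nat \<Rightarrow> nat \<Rightarrow> (nat \<Rightarrow> nat \<Rightarrow> bool) \<Rightarrow> bool" where
  "family_F r n G \<longleftrightarrow> simple_graph n G \<and>
    (let a = n div r; b = n mod r in
      a \<ge> 1 \<and>
      (if b = 0 then regular_on G {0..<n} ((r - 1) * a)
       else (\<exists>X Y. X \<union> Y = {0..<n} \<and> X \<inter> Y = {} \<and>
               card X = b * (a + 1) \<and> card Y = (r - b) * a \<and>
               (\<forall>x\<in>X. \<forall>y\<in>Y. G x y) \<and>
               regular_on G X ((b - 1) * (a + 1)) \<and>
               regular_on G Y ((r - b - 1) * a))))"

end

theory Submission
  imports Defs
begin

(* Both joins split their vertex set into the independent set S of size s and two parts X, Y of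
   sizes b(a+1) and (r-b)a (X is empty when b = 0) that are completely joined to each other and
   induce regular graphs of the same degrees (b-1)(a+1) and (r-b-1)a; for T_r(n) the parts are
   the residue classes below and above b.  A vector that is constant on S, X and Y is therefore
   an eigenvector of either adjacency matrix as soon as its three values solve the eigen-equations
   of the common 3x3 quotient matrix, and these have a positive solution by the intermediate value
   theorem.  Since a nonnegative matrix with a positive eigenvector has that eigenvalue as its
   spectral radius, the two spectral radii agree. *)

lemma spectral_radius_of_real_pos_eigenvector:
  fixes A :: "real mat" and v :: "real vec" and \<rho> :: real
  assumes A: "A \<in> carrier_mat n n" and n: "n > 0"
    and nonneg: "\<And>i j. i < n \<Longrightarrow> j < n \<Longrightarrow> A $$ (i, j) \<ge> 0"
    and v: "v \<in> carrier_vec n" and pos: "\<And>i. i < n \<Longrightarrow> v $ i > 0"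
    and eigen: "A *\<^sub>v v = \<rho> \<cdot>\<^sub>v v"
  shows "spectral_radius (map_mat complex_of_real A) = \<rho>"
proof -
  let ?B = "map_mat complex_of_real A"
  have B: "?B \<in> carrier_mat n n" using A by simp
  have row_sum: "(A *\<^sub>v v) $ i = (\<Sum>j<n. A $$ (i, j) * v $ j)" if "i < n" for i
    using A v that by (simp add: scalar_prod_def lessThan_atLeast0)
  have "v \<noteq> 0\<^sub>v n" using pos[OF n] n by auto
  then have "eigenvalue A \<rho>"
    unfolding eigenvalue_def eigenvector_def using A v eigen by auto
  then have "complex_of_real \<rho> \<in> spectrum ?B"
    using of_real_hom.eigenvalue_hom[OF A] unfolding spectrum_def by simp
  moreover have "\<rho> \<ge> 0"
  proof -
    have "0 \<le> (\<Sum>j<n. A $$ (0, j) * v $ j)"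
      using nonneg[OF n] pos by (intro sum_nonneg) (simp add: less_imp_le)
    also have "\<dots> = \<rho> * v $ 0" using row_sum[OF n] eigen v n by simp
    finally show ?thesis using pos[OF n] by (simp add: zero_le_mult_iff)
  qed
  ultimately have lower: "\<rho> \<le> spectral_radius ?B"
    using spectral_radius_mem_max(2)[OF B n, of \<rho>] by force
  obtain \<mu> where "\<mu> \<in> spectrum ?B" and rho: "spectral_radius ?B = norm \<mu>"
    using spectral_radius_mem_max(1)[OF B n] by auto
  then obtain x where x: "x \<in> carrier_vec n" "x \<noteq> 0\<^sub>v n" and Bx: "?B *\<^sub>v x = \<mu> \<cdot>\<^sub>v x"
    unfolding spectrum_def eigenvalue_def eigenvector_def using A by auto
  \<comment> \<open>At a coordinate maximising |x_i| / v_i the eigen-equation for x is dominated by that for v.\<close>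
  define ratio where "ratio j = norm (x $ j) / v $ j" for j
  obtain i where i: "i < n" and i_max: "\<And>j. j < n \<Longrightarrow> ratio j \<le> ratio i"
  proof -
    have "Max (ratio ` {..<n}) \<in> ratio ` {..<n}" using n by (intro Max_in) auto
    then obtain i where "i < n" "ratio i = Max (ratio ` {..<n})" by auto
    then show ?thesis using that by (metis Max_ge finite_imageI finite_lessThan image_eqI lessThan_iff)
  qed
  have bound: "norm (x $ j) \<le> ratio i * v $ j" if "j < n" for j
    using i_max[OF that] pos[OF that] unfolding ratio_def by (simp add: divide_le_eq)
  have xi: "norm (x $ i) = ratio i * v $ i" using pos[OF i] unfolding ratio_def by simp
  obtain j where j: "j < n" "x $ j \<noteq> 0"
  proof (rule ccontr)
    assume "\<not> thesis"
    then have "x = 0\<^sub>v n" using that x by (intro eq_vecI) auto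
    then show False using x by simp
  qed
  have "0 < norm (x $ j)" using j by simp
  also have "\<dots> \<le> ratio i * v $ j" using bound j(1) by simp
  finally have "norm (x $ i) > 0" using xi pos[OF i] pos[OF j(1)] by (simp add: zero_less_mult_iff)
  have "norm \<mu> * norm (x $ i) = norm (\<Sum>j<n. complex_of_real (A $$ (i, j)) * x $ j)"
    using arg_cong[OF Bx, of "\<lambda>y. norm (y $ i)"] A x i
    by (simp add: norm_mult scalar_prod_def lessThan_atLeast0)
  also have "\<dots> \<le> (\<Sum>j<n. A $$ (i, j) * norm (x $ j))"
    by (rule order_trans[OF norm_sum]) (simp add: norm_mult abs_of_nonneg nonneg i)
  also have "\<dots> \<le> (\<Sum>j<n. A $$ (i, j) * (ratio i * v $ j))"
    by (intro sum_mono mult_left_mono bound nonneg i) simp_all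
  also have "\<dots> = ratio i * (A *\<^sub>v v) $ i"
    by (simp add: row_sum[OF i] sum_distrib_left mult_ac)
  also have "\<dots> = \<rho> * norm (x $ i)" using eigen v i xi by simp
  finally have "norm \<mu> \<le> \<rho>" using \<open>norm (x $ i) > 0\<close> by simp
  then show ?thesis using lower rho by simp
qed

lemma adj_mat_of_real: "adj_mat n G = map_mat complex_of_real (mat n n (\<lambda>(i, j). if G i j then 1 else 0))"
  unfolding adj_mat_def by (rule eq_matI) auto

lemma graph_spectral_radius_pos_eigenvector:
  fixes v :: "nat \<Rightarrow> real"
  assumes n: "n > 0" and pos: "\<And>i. i < n \<Longrightarrow> v i > 0"
    and eigen: "\<And>i. i < n \<Longrightarrow> (\<Sum>j<n. if G i j then v j else 0) = \<rho> * v i"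
  shows "graph_spectral_radius n G = \<rho>"
  unfolding graph_spectral_radius_def adj_mat_of_real
proof (rule spectral_radius_of_real_pos_eigenvector[where v = "vec n v"])
  show "mat n n (\<lambda>(i, j). if G i j then 1 else 0) *\<^sub>v vec n v = \<rho> \<cdot>\<^sub>v vec n v"
    by (intro eq_vecI) (auto simp: scalar_prod_def lessThan_atLeast0 simp flip: eigen intro!: sum.cong)
qed (use n pos in auto)

lemma sum_join_empty_neighbours:
  fixes v :: "nat \<Rightarrow> real"
  assumes "i < s + n"
  shows "(\<Sum>j<s + n. if join_empty s n G i j then v j else 0) =
    (if i < s then (\<Sum>k<n. v (s + k))
     else (\<Sum>j<s. v j) + (\<Sum>k<n. if G (i - s) k then v (s + k) else 0))"
proof -
  have sum_split: "(\<Sum>j<s + n. f j) = (\<Sum>j<s. f j) + (\<Sum>k<n. f (s + k))" for f :: "nat \<Rightarrow> real"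
  proof -
    have "(\<Sum>j<s + n. f j) = (\<Sum>j=0..<s. f j) + (\<Sum>j=0+s..<n+s. f j)"
      by (simp add: lessThan_atLeast0 sum.atLeastLessThan_concat add.commute)
    then show ?thesis by (simp only: sum.shift_bounds_nat_ivl) (simp add: lessThan_atLeast0 add.commute)
  qed
  show ?thesis using assms unfolding sum_split join_empty_def by (auto simp: add.commute)
qed

lemma graph_spectral_radius_join_empty:
  fixes u :: "nat \<Rightarrow> real"
  assumes s: "s > 0" and pos: "\<And>k. k < n \<Longrightarrow> u k > 0"
    and eigen_empty: "\<rho> = (\<Sum>k<n. u k)"
    and eigen_G: "\<And>k. k < n \<Longrightarrow> \<rho> * u k = s + (\<Sum>k'<n. if G k k' then u k' else 0)"
  shows "graph_spectral_radius (s + n) (join_empty s n G) = \<rho>"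
proof (rule graph_spectral_radius_pos_eigenvector[where v = "\<lambda>i. if i < s then 1 else u (i - s)"])
  fix i assume i: "i < s + n"
  show "(\<Sum>j<s + n. if join_empty s n G i j then (if j < s then 1 else u (j - s)) else 0) =
    \<rho> * (if i < s then 1 else u (i - s))"
  proof (cases "i < s")
    case True
    then show ?thesis using eigen_empty i by (simp add: sum_join_empty_neighbours)
  next
    case False
    have "(\<Sum>k<n. if G (i - s) k then (if s + k < s then 1 else u (s + k - s)) else 0) =
        (\<Sum>k<n. if G (i - s) k then u k else 0)"
      by (intro sum.cong) auto
    then show ?thesis using False eigen_G[of "i - s"] i by (simp add: sum_join_empty_neighbours)
  qed
qed (use s pos in auto)

lemma sum_lessThan_partition:
  fixes f :: "nat \<Rightarrow> 'a::comm_monoid_add"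
  assumes "X \<union> Y = {0..<n}" and "X \<inter> Y = {}"
  shows "(\<Sum>k<n. f k) = sum f X + sum f Y"
proof -
  have "finite (X \<union> Y)" unfolding assms(1) by simp
  then have "finite X" "finite Y" by simp_all
  have "(\<Sum>k<n. f k) = sum f (X \<union> Y)" by (simp add: assms(1) lessThan_atLeast0)
  also have "\<dots> = sum f X + sum f Y" by (rule sum.union_disjoint) fact+
  finally show ?thesis .
qed

definition regular_join_partition ::
    "nat \<Rightarrow> (nat \<Rightarrow> nat \<Rightarrow> bool) \<Rightarrow> nat set \<Rightarrow> nat set \<Rightarrow> nat \<Rightarrow> nat \<Rightarrow> bool" where
  "regular_join_partition n G X Y dX dY \<longleftrightarrow>
    X \<union> Y = {0..<n} \<and> X \<inter> Y = {} \<and> (\<forall>x\<in>X. \<forall>y\<in>Y. G x y \<and> G y x) \<and>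
    regular_on G X dX \<and> regular_on G Y dY"

lemma sum_neighbours_regular_join_partition:
  fixes q t :: real
  assumes P: "regular_join_partition n G X Y dX dY" and k: "k < n"
  shows "(\<Sum>k'<n. if G k k' then (if k' \<in> X then q else t) else 0) =
    (if k \<in> X then dX * q + card Y * t else card X * q + dY * t)"
proof -
  have XY: "X \<union> Y = {0..<n}" "X \<inter> Y = {}" and cross: "\<forall>x\<in>X. \<forall>y\<in>Y. G x y \<and> G y x"
    and deg_X: "\<forall>x\<in>X. card {k'\<in>X. G x k'} = dX" and deg_Y: "\<forall>y\<in>Y. card {k'\<in>Y. G y k'} = dY"
    using P by (simp_all add: regular_join_partition_def regular_on_def)
  have "finite (X \<union> Y)" unfolding XY(1) by simp
  then have fin: "finite X" "finite Y" by simp_all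
  have "(\<Sum>k'<n. if G k k' then (if k' \<in> X then q else t) else 0) =
      (\<Sum>k'\<in>X. if G k k' then q else 0) + (\<Sum>k'\<in>Y. if G k k' then t else 0)"
    unfolding sum_lessThan_partition[OF XY] using XY(2) by (intro arg_cong2[where f = "(+)"] sum.cong) auto
  also have "\<dots> = (\<Sum>k'\<in>{k'\<in>X. G k k'}. q) + (\<Sum>k'\<in>{k'\<in>Y. G k k'}. t)"
    using fin by (simp only: sum.inter_filter)
  also have "\<dots> = card {k'\<in>X. G k k'} * q + card {k'\<in>Y. G k k'} * t"
    by simp
  also have "\<dots> = (if k \<in> X then dX * q + card Y * t else card X * q + dY * t)"
  proof (cases "k \<in> X")
    case True
    have "{k'\<in>Y. G k k'} = Y" using cross True by blast
    then have "card {k'\<in>Y. G k k'} = card Y" by (rule arg_cong)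
    moreover have "card {k'\<in>X. G k k'} = dX" using deg_X True by (rule bspec)
    ultimately show ?thesis using True by simp
  next
    case False
    have "k \<in> X \<union> Y" using XY(1) k by simp
    with False have "k \<in> Y" by simp
    have "{k'\<in>X. G k k'} = X" using cross \<open>k \<in> Y\<close> by blast
    then have "card {k'\<in>X. G k k'} = card X" by (rule arg_cong)
    moreover have "card {k'\<in>Y. G k k'} = dY" using deg_Y \<open>k \<in> Y\<close> by (rule bspec)
    ultimately show ?thesis using False by simp
  qed
  finally show ?thesis .
qed

lemma graph_spectral_radius_join_regular_join_partition:
  fixes q t :: real
  assumes P: "regular_join_partition n G X Y dX dY" and s: "s > 0" and q: "q > 0" and t: "t > 0"
    and eigen_empty: "\<rho> = card X * q + card Y * t"
    and eigen_X: "X \<noteq> {} \<Longrightarrow> \<rho> * q = s + dX * q + card Y * t"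
    and eigen_Y: "Y \<noteq> {} \<Longrightarrow> \<rho> * t = s + card X * q + dY * t"
  shows "graph_spectral_radius (s + n) (join_empty s n G) = \<rho>"
proof (rule graph_spectral_radius_join_empty[where u = "\<lambda>k. if k \<in> X then q else t"])
  have XY: "X \<union> Y = {0..<n}" "X \<inter> Y = {}" using P unfolding regular_join_partition_def by auto
  have "(\<Sum>k<n. if k \<in> X then q else t) = (\<Sum>k\<in>X. q) + (\<Sum>k\<in>Y. t)"
    unfolding sum_lessThan_partition[OF XY] using XY(2) by (intro arg_cong2[where f = "(+)"] sum.cong) auto
  then show "\<rho> = (\<Sum>k<n. if k \<in> X then q else t)" using eigen_empty by simp
  fix k assume k: "k < n"
  then have "k \<in> X \<union> Y" using XY(1) by simp
  then show "\<rho> * (if k \<in> X then q else t) = s + (\<Sum>k'<n. if G k k' then (if k' \<in> X then q else t) else 0)"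
    unfolding sum_neighbours_regular_join_partition[OF P k] using eigen_X eigen_Y XY(2)
    by (auto simp: add.assoc)
qed (use s q t in auto)

(* (1, q, t) is a positive eigenvector of the quotient matrix ((0, x, y), (s, x - \<alpha>, y), (s, x, y - \<beta>))
   of a partition S, X, Y as above, with \<alpha> = |X| - dX and \<beta> = |Y| - dY. *)
lemma three_part_quotient_pos_eigenvector:
  fixes s x y \<alpha> \<beta> :: real
  assumes s: "s > 0" and x: "x \<ge> 0" and y: "y \<ge> 0" and xy: "x + y > 0"
    and \<alpha>: "\<alpha> > 0" and \<beta>: "\<beta> > 0"
  obtains \<rho> q t where "q > 0" "t > 0" "\<rho> = x * q + y * t"
    "\<rho> * q = s + (x - \<alpha>) * q + y * t" "\<rho> * t = s + x * q + (y - \<beta>) * t"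
proof -
  \<comment> \<open>With the first entry normalised to 1, the last two equations say q = Q \<rho> and t = T \<rho>;
    the first one, \<rho> = x Q \<rho> + y T \<rho>, is solved on [0, M] by the intermediate value theorem.\<close>
  define Q where "Q r = (r + s) / (r + \<alpha>)" for r
  define T where "T r = (r + s) / (r + \<beta>)" for r
  define h where "h r = r - (x * Q r + y * T r)" for r
  define M where "M = x * (1 + s / \<alpha>) + y * (1 + s / \<beta>)"
  have M: "M \<ge> 0" unfolding M_def using x y s \<alpha> \<beta> by simp
  have "0 < x * (s / \<alpha>) + y * (s / \<beta>)"
    using x y xy s \<alpha> \<beta> by (smt (verit) divide_pos_pos mult_nonneg_nonneg mult_pos_pos)
  then have h0: "h 0 \<le> 0" unfolding h_def Q_def T_def using \<alpha> \<beta> by simp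
  have "Q M \<le> 1 + s / \<alpha>" "T M \<le> 1 + s / \<beta>"
    unfolding Q_def T_def using M s \<alpha> \<beta> by (simp_all add: divide_le_eq field_simps)
  then have "x * Q M + y * T M \<le> M"
    unfolding M_def using x y by (intro add_mono mult_left_mono)
  then have hM: "h M \<ge> 0" unfolding h_def by simp
  have "continuous_on {0..M} h"
    unfolding h_def Q_def T_def using \<alpha> \<beta> by (intro continuous_intros) auto
  then obtain r where r: "r \<ge> 0" "h r = 0" using IVT'[of h 0 0 M] h0 hM M by auto
  have Q: "Q r * (r + \<alpha>) = r + s" and T: "T r * (r + \<beta>) = r + s"
    unfolding Q_def T_def using r \<alpha> \<beta> by simp_all
  have \<rho>: "r = x * Q r + y * T r" using r unfolding h_def by simp
  show ?thesis
  proof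
    show "Q r > 0" "T r > 0" unfolding Q_def T_def using r s \<alpha> \<beta> by simp_all
    show "r = x * Q r + y * T r" by (fact \<rho>)
    show "r * Q r = s + (x - \<alpha>) * Q r + y * T r" using Q \<rho> by (simp add: algebra_simps)
    show "r * T r = s + x * Q r + (y - \<beta>) * T r" using T \<rho> by (simp add: algebra_simps)
  qed
qed

lemma of_nat_pred_mult:
  fixes k m :: nat
  assumes "k \<ge> 1"
  shows "(of_nat ((k - 1) * m) :: 'a::ring_1) = of_nat (k * m) - of_nat m"
  using assms by (simp add: diff_mult_distrib of_nat_diff)

lemma graph_spectral_radius_join_family_partition:
  fixes q t \<rho> :: real
  assumes P: "regular_join_partition n G X Y ((b - 1) * (a + 1)) ((r - b - 1) * a)"
    and card_X: "card X = b * (a + 1)" and card_Y: "card Y = (r - b) * a"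
    and b: "b < r" and s: "s > 0" and q: "q > 0" and t: "t > 0"
    and eigen_empty: "\<rho> = real (b * (a + 1)) * q + real ((r - b) * a) * t"
    and eigen_X: "\<rho> * q = s + (real (b * (a + 1)) - real (a + 1)) * q + real ((r - b) * a) * t"
    and eigen_Y: "\<rho> * t = s + real (b * (a + 1)) * q + (real ((r - b) * a) - real a) * t"
  shows "graph_spectral_radius (s + n) (join_empty s n G) = \<rho>"
proof (rule graph_spectral_radius_join_regular_join_partition[OF P s q t])
  show "\<rho> = card X * q + card Y * t" using eigen_empty card_X card_Y by simp
next
  assume "X \<noteq> {}"
  moreover have "finite (X \<union> Y)" using P unfolding regular_join_partition_def by simp
  ultimately have "b \<ge> 1" using card_X by (cases b) auto
  then show "\<rho> * q = s + real ((b - 1) * (a + 1)) * q + card Y * t"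
    using eigen_X card_Y unfolding of_nat_pred_mult[OF \<open>b \<ge> 1\<close>] by simp
next
  have "r - b \<ge> 1" using b by simp
  then show "\<rho> * t = s + card X * q + real ((r - b - 1) * a) * t"
    using eigen_Y card_X unfolding of_nat_pred_mult[OF \<open>r - b \<ge> 1\<close>] by simp
qed

lemma graph_spectral_radius_join_partition_eq:
  fixes a b r s :: nat
  assumes a: "a \<ge> 1" and b: "b < r" and s: "s > 0"
    and G: "regular_join_partition n G X Y ((b - 1) * (a + 1)) ((r - b - 1) * a)"
      "card X = b * (a + 1)" "card Y = (r - b) * a"
    and H: "regular_join_partition n H X' Y' ((b - 1) * (a + 1)) ((r - b - 1) * a)"
      "card X' = b * (a + 1)" "card Y' = (r - b) * a"
  shows "graph_spectral_radius (s + n) (join_empty s n G) = graph_spectral_radius (s + n) (join_empty s n H)"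
proof -
  obtain \<rho> q t where q: "q > 0" and t: "t > 0"
    and eigen: "\<rho> = real (b * (a + 1)) * q + real ((r - b) * a) * t"
      "\<rho> * q = s + (real (b * (a + 1)) - real (a + 1)) * q + real ((r - b) * a) * t"
      "\<rho> * t = s + real (b * (a + 1)) * q + (real ((r - b) * a) - real a) * t"
  proof (rule three_part_quotient_pos_eigenvector)
    show "real s > 0" "real (b * (a + 1)) \<ge> 0" "real ((r - b) * a) \<ge> 0" "real (a + 1) > 0"
      using s by simp_all
    show "real a > 0" using a by simp
    have "(r - b) * a > 0" using a b by simp
    then show "real (b * (a + 1)) + real ((r - b) * a) > 0"
      by (metis add_nonneg_pos of_nat_0_le_iff of_nat_0_less_iff)
  qed
  have radius: "graph_spectral_radius (s + n) (join_empty s n K) = \<rho>"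
    if "regular_join_partition n K Z W ((b - 1) * (a + 1)) ((r - b - 1) * a)"
      "card Z = b * (a + 1)" "card W = (r - b) * a" for K Z W
    using graph_spectral_radius_join_family_partition[OF that b s q t eigen] .
  show ?thesis using radius[OF G] radius[OF H] by simp
qed

lemma family_F_regular_join_partition:
  assumes "family_F r n G"
  obtains X Y where
    "regular_join_partition n G X Y ((n mod r - 1) * (n div r + 1)) ((r - n mod r - 1) * (n div r))"
    "card X = n mod r * (n div r + 1)" "card Y = (r - n mod r) * (n div r)"
proof (cases "n mod r = 0")
  case True
  then have "regular_on G {0..<n} ((r - 1) * (n div r))"
    using assms unfolding family_F_def Let_def by simp
  moreover have "r * (n div r) = n" using True mult_div_mod_eq[of r n] by simp
  ultimately show ?thesis
    using that[of "{}" "{0..<n}"] True by (simp add: regular_join_partition_def regular_on_def)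
next
  case False
  then have "\<exists>X Y. X \<union> Y = {0..<n} \<and> X \<inter> Y = {} \<and>
      card X = n mod r * (n div r + 1) \<and> card Y = (r - n mod r) * (n div r) \<and>
      (\<forall>x\<in>X. \<forall>y\<in>Y. G x y) \<and>
      regular_on G X ((n mod r - 1) * (n div r + 1)) \<and> regular_on G Y ((r - n mod r - 1) * (n div r))"
    using assms unfolding family_F_def Let_def by simp
  then obtain X Y where XY: "X \<union> Y = {0..<n}" "X \<inter> Y = {}"
    and cards: "card X = n mod r * (n div r + 1)" "card Y = (r - n mod r) * (n div r)"
    and cross: "\<forall>x\<in>X. \<forall>y\<in>Y. G x y"
    and regular: "regular_on G X ((n mod r - 1) * (n div r + 1))" "regular_on G Y ((r - n mod r - 1) * (n div r))"
    by (elim exE conjE)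
  have "simple_graph n G" using assms unfolding family_F_def by simp
  then have "\<forall>x\<in>X. \<forall>y\<in>Y. G x y \<and> G y x"
    using cross unfolding simple_graph_def by blast
  then show ?thesis
    using that XY cards regular by (simp add: regular_join_partition_def)
qed

lemma mult_add_less_mult_add_iff:
  fixes q a b c r :: nat
  assumes c: "c < r" and b: "b < r"
  shows "r * q + c < r * a + b \<longleftrightarrow> q < a \<or> (q = a \<and> c < b)"
proof (cases q a rule: linorder_cases)
  case less
  then have "r * q + r \<le> r * a" using mult_le_mono2[of "Suc q" a r] by simp
  then show ?thesis using less c by simp
next
  case greater
  then have "r * a + r \<le> r * q" using mult_le_mono2[of "Suc a" q r] by simp
  then show ?thesis using greater b by simp
qed simp

lemma card_residue_class:
  fixes r a b c :: nat
  assumes c: "c < r" and b: "b < r"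
  shows "card {k. k < r * a + b \<and> k mod r = c} = a + (if c < b then 1 else 0)"
proof -
  have "{k. k < r * a + b \<and> k mod r = c} = (\<lambda>q. r * q + c) ` {q. q < a \<or> (q = a \<and> c < b)}"
  proof (intro equalityI subsetI)
    fix k assume "k \<in> {k. k < r * a + b \<and> k mod r = c}"
    then have k: "k < r * a + b" "r * (k div r) + c = k" using mult_div_mod_eq[of r k] by auto
    then have "k div r \<in> {q. q < a \<or> (q = a \<and> c < b)}"
      using mult_add_less_mult_add_iff[OF c b, of "k div r" a] by simp
    then show "k \<in> (\<lambda>q. r * q + c) ` {q. q < a \<or> (q = a \<and> c < b)}"
      by (rule image_eqI[where f = "\<lambda>q. r * q + c", rotated]) (use k(2) in simp)
  next
    fix k assume "k \<in> (\<lambda>q. r * q + c) ` {q. q < a \<or> (q = a \<and> c < b)}"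
    then obtain q where "q < a \<or> (q = a \<and> c < b)" "k = r * q + c" by blast
    then show "k \<in> {k. k < r * a + b \<and> k mod r = c}"
      using mult_add_less_mult_add_iff[OF c b, of q a] c by simp
  qed
  moreover have "inj_on (\<lambda>q. r * q + c) A" for A using c by (simp add: inj_on_def)
  moreover have "{q. q < a \<or> (q = a \<and> c < b)} = (if c < b then {..a} else {..<a})" by auto
  ultimately show ?thesis by (simp add: card_image)
qed

lemma card_residues_in:
  fixes r a b :: nat
  assumes C: "C \<subseteq> {..<r}" and b: "b < r"
  shows "card {k. k < r * a + b \<and> k mod r \<in> C} = a * card C + card (C \<inter> {..<b})"
proof -
  have fin: "finite C" using C finite_subset by blast
  have "{k. k < r * a + b \<and> k mod r \<in> C} = (\<Union>c\<in>C. {k. k < r * a + b \<and> k mod r = c})" by auto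
  then have "card {k. k < r * a + b \<and> k mod r \<in> C} = (\<Sum>c\<in>C. card {k. k < r * a + b \<and> k mod r = c})"
    using fin by (simp only:) (intro card_UN_disjoint; auto)
  also have "\<dots> = (\<Sum>c\<in>C. a + (if c < b then 1 else 0))"
    using C b by (intro sum.cong refl card_residue_class) auto
  also have "\<dots> = a * card C + card (C \<inter> {..<b})"
    using fin by (simp add: sum.distrib sum.If_cases Int_def)
  finally show ?thesis .
qed

lemma turan_neighbours_in_residues:
  assumes "i < n"
  shows "{j \<in> {k. k < n \<and> k mod r \<in> C}. turan r n i j} = {k. k < n \<and> k mod r \<in> C - {i mod r}}"
  using assms by (auto simp: turan_def)

lemma regular_join_partition_turan:
  fixes r a b :: nat
  assumes n: "n = r * a + b" and b: "b < r"
  shows "regular_join_partition n (turan r n) {k. k < n \<and> k mod r \<in> {..<b}} {k. k < n \<and> k mod r \<in> {b..<r}}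
    ((b - 1) * (a + 1)) ((r - b - 1) * a)"
proof -
  let ?X = "{k. k < n \<and> k mod r \<in> {..<b}}" and ?Y = "{k. k < n \<and> k mod r \<in> {b..<r}}"
  have "?X \<union> ?Y = {0..<n}" "?X \<inter> ?Y = {}" using b by auto
  moreover have "\<forall>x\<in>?X. \<forall>y\<in>?Y. turan r n x y \<and> turan r n y x" by (auto simp: turan_def)
  moreover have "regular_on (turan r n) ?X ((b - 1) * (a + 1))"
    unfolding regular_on_def
  proof
    fix i assume i: "i \<in> ?X"
    have "card ({..<b} - {i mod r}) = b - 1" "({..<b} - {i mod r}) \<inter> {..<b} = {..<b} - {i mod r}"
      using i by auto
    moreover have "{j \<in> ?X. turan r n i j} = {k. k < n \<and> k mod r \<in> {..<b} - {i mod r}}"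
      using i by (intro turan_neighbours_in_residues) simp
    moreover have "{..<b} - {i mod r} \<subseteq> {..<r}" using b by auto
    ultimately show "card {j \<in> ?X. turan r n i j} = (b - 1) * (a + 1)"
      using card_residues_in[of "{..<b} - {i mod r}" r b a] b unfolding n
      by (simp add: mult.commute)
  qed
  moreover have "regular_on (turan r n) ?Y ((r - b - 1) * a)"
    unfolding regular_on_def
  proof
    fix i assume i: "i \<in> ?Y"
    have "card ({b..<r} - {i mod r}) = r - b - 1" "({b..<r} - {i mod r}) \<inter> {..<b} = {}"
      using i by auto
    moreover have "{j \<in> ?Y. turan r n i j} = {k. k < n \<and> k mod r \<in> {b..<r} - {i mod r}}"
      using i by (intro turan_neighbours_in_residues) simp
    moreover have "{b..<r} - {i mod r} \<subseteq> {..<r}" by auto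
    ultimately show "card {j \<in> ?Y. turan r n i j} = (r - b - 1) * a"
      using card_residues_in[of "{b..<r} - {i mod r}" r b a] b unfolding n
      by (simp add: mult.commute)
  qed
  ultimately show ?thesis unfolding regular_join_partition_def by blast
qed

lemma card_turan_parts:
  fixes r a b :: nat
  assumes n: "n = r * a + b" and b: "b < r"
  shows "card {k. k < n \<and> k mod r \<in> {..<b}} = b * (a + 1)"
    and "card {k. k < n \<and> k mod r \<in> {b..<r}} = (r - b) * a"
proof -
  have "{b..<r} \<inter> {..<b} = {}" "{b..<r} \<subseteq> {..<r}" by auto
  then show "card {k. k < n \<and> k mod r \<in> {..<b}} = b * (a + 1)"
    and "card {k. k < n \<and> k mod r \<in> {b..<r}} = (r - b) * a"
    using card_residues_in[of "{..<b}" r b a] card_residues_in[of "{b..<r}" r b a] b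
    unfolding n by (simp_all add: algebra_simps)
qed

theorem lemma3p5:
  fixes r s n :: nat and F :: "nat \<Rightarrow> nat \<Rightarrow> bool"
  assumes "r \<ge> 2" and "s \<ge> 1" and "family_F r n F"
  shows "graph_spectral_radius (s + n) (join_empty s n F) =
         graph_spectral_radius (s + n) (join_empty s n (turan r n))"
proof -
  let ?a = "n div r" and ?b = "n mod r"
  have b: "?b < r" and n: "n = r * ?a + ?b" using assms(1) by simp_all
  have a: "?a \<ge> 1" using assms(3) unfolding family_F_def Let_def by simp
  have s: "s > 0" using assms(2) by simp
  obtain X Y where "regular_join_partition n F X Y ((?b - 1) * (?a + 1)) ((r - ?b - 1) * ?a)"
    "card X = ?b * (?a + 1)" "card Y = (r - ?b) * ?a"
    using family_F_regular_join_partition[OF assms(3)] .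
  then show ?thesis
    using graph_spectral_radius_join_partition_eq[OF a b s _ _ _
        regular_join_partition_turan[OF n b] card_turan_parts[OF n b]]
    by blast
qed

end
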